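(* Let $X_1,X_2,Y$ be cellular spaces with $X_1,X_2$ compact, let $r\ge0$, and let $a_i\colon X_i\to Y$, $i=1,2$, be maps such that the constant map $X_i\to Y$ is strongly $r$-similar to $a_i$. Then the constant map $X_1\vee X_2\to Y$ is strongly $r$-similar to $a_1\,\bar\vee\,a_2\colon X_1\vee X_2\to Y$ (the map restricting to $a_i$ on $X_i$).
   Context: Cellular space = based CW complex; maps based. Strong similarity: $\langle W\rangle$ = free abelian group on a set $W$. $Y^X$ = based maps (compact-open), based at the constant map; $Y^X_a$ = path component of $a$; $V\mapsto V|_R$ restriction; $\mathcal F_n(X)$ = finite $R\subseteq X$ containing the basepoint with $|R|\le n+1$; $\langle Y^X\rangle^{(s)}=\{V:V|_R=0\ \forall R\in\mathcal F_{s-1}(X)\}$. For unbased $U,V$: $V^{(U)}$ = unbased maps; $\Xi^U(v)$ = constant map at $v$; for $U=\coprod_iU_i$ the combining product $\boxed{\sqcup}_i\langle w_i\rangle=\langle w\rangle$, $w|_{U_i}=w_i$, multilinear. For nonempty finite $E$: simplex $\Delta E$, faces $\Delta F$; layouts = sets $A$ of pairwise disjoint nonempty subsets; $\Delta[A]=\coprod_{F\in A}\Delta F$; $S\in\langle V^{(\Delta E)}\rangle$ fissile if $S|_{\Delta[A]}=\boxed{\sqcup}_{F\in A}S|_{\Delta F}$ for all layouts. $U\wr X=(U\times X)/(U\times\{x_0\})$, $\#^X(w)(u\wr x)=w(u)(x)$, $\langle (Y^X)^{(U)}\rangle^{(s)}_X=\langle\#^X\rangle^{-1}\langle Y^{U\wr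 X}\rangle^{(s)}$. $a\overset{r}{\approx}b$ iff for each nonempty finite $E$ there is a fissile $S\in\langle (Y^X_a)^{(\Delta E)}\rangle$ with $\langle\Xi^{\Delta E}(b)\rangle-S\in\langle (Y^X)^{(\Delta E)}\rangle^{(r+1)}_X$. *)

theory Defs
  imports "HOL-Analysis.Analysis" "HOL-Library.Poly_Mapping"
begin

text \<open>The free abelian group on a set W is modelled as the finitely supported
integer-valued functions on W, i.e. elements of type ('w =>0 int) with keys in W.\<close>

definition gen :: "'w \<Rightarrow> 'w \<Rightarrow>\<^sub>0 int" where
  "gen w = Poly_Mapping.single w 1"

definition fag :: "'w set \<Rightarrow> ('w \<Rightarrow>\<^sub>0 int) set" where
  "fag W = {V. Poly_Mapping.keys V \<subseteq> W}"

definition linext :: "('w \<Rightarrow> 'v) \<Rightarrow> ('w \<Rightarrow>\<^sub>0 int) \<Rightarrow> ('v \<Rightarrow>\<^sub>0 int)" where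
  "linext f V = (\<Sum>w\<in>Poly_Mapping.keys V. Poly_Mapping.single (f w) (Poly_Mapping.lookup V w))"

definition quotient_top :: "'a topology \<Rightarrow> ('a \<Rightarrow> 'b) \<Rightarrow> 'b topology" where
  "quotient_top X q = topology (\<lambda>S. S \<subseteq> q ` topspace X \<and> openin X {x \<in> topspace X. q x \<in> S})"

definition disj_union_top :: "'a topology \<Rightarrow> 'b topology \<Rightarrow> ('a + 'b) topology" where
  "disj_union_top X1 X2 = topology (\<lambda>S. S \<subseteq> Inl ` topspace X1 \<union> Inr ` topspace X2
      \<and> openin X1 (Inl -` S) \<and> openin X2 (Inr -` S))"

text \<open>Wedge of based spaces: the basepoint Inr x2 is identified with Inl x1;
the basepoint of the wedge is Inl x1.\<close>
definition wedge_proj :: "'a \<Rightarrow> 'b \<Rightarrow> 'a + 'b \<Rightarrow> 'a + 'b" where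
  "wedge_proj x1 x2 p = (case p of Inl x \<Rightarrow> Inl x | Inr x \<Rightarrow> if x = x2 then Inl x1 else Inr x)"

definition wedge_top :: "'a topology \<Rightarrow> 'a \<Rightarrow> 'b topology \<Rightarrow> 'b \<Rightarrow> ('a + 'b) topology" where
  "wedge_top X1 x1 X2 x2 = quotient_top (disj_union_top X1 X2) (wedge_proj x1 x2)"

definition wedge_map :: "'a topology \<Rightarrow> 'a \<Rightarrow> 'b topology \<Rightarrow> 'b \<Rightarrow> ('a \<Rightarrow> 'c) \<Rightarrow> ('b \<Rightarrow> 'c) \<Rightarrow> 'a + 'b \<Rightarrow> 'c" where
  "wedge_map X1 x1 X2 x2 a1 a2 =
     restrict (\<lambda>p. case p of Inl x \<Rightarrow> a1 x | Inr x \<Rightarrow> a2 x) (topspace (wedge_top X1 x1 X2 x2))"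

definition disc :: "nat \<Rightarrow> (nat \<Rightarrow> real) set" where
  "disc n = {v. (\<forall>i\<ge>n. v i = 0) \<and> (\<Sum>i<n. (v i)\<^sup>2) \<le> 1}"

definition odisc :: "nat \<Rightarrow> (nat \<Rightarrow> real) set" where
  "odisc n = {v. (\<forall>i\<ge>n. v i = 0) \<and> (\<Sum>i<n. (v i)\<^sup>2) < 1}"

definition bsphere :: "nat \<Rightarrow> (nat \<Rightarrow> real) set" where
  "bsphere n = {v. (\<forall>i\<ge>n. v i = 0) \<and> (\<Sum>i<n. (v i)\<^sup>2) = 1}"

text \<open>The closed n-disc with its Euclidean topology (finitely supported vectors in the
product topology carry the Euclidean topology).\<close>
definition disc_top :: "nat \<Rightarrow> (nat \<Rightarrow> real) topology" where
  "disc_top n = subtopology (powertop_real UNIV) (disc n)"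

text \<open>A CW complex: Hausdorff space partitioned into open cells C of dimension d C with
characteristic maps Phi C from the closed disc, a homeomorphism from the open disc onto C,
boundary sphere mapped into finitely many cells of lower dimension (closure finiteness),
and the weak topology determined by the characteristic maps.\<close>
definition cw_structure :: "'a topology \<Rightarrow> 'a set set \<Rightarrow> ('a set \<Rightarrow> nat) \<Rightarrow> ('a set \<Rightarrow> (nat \<Rightarrow> real) \<Rightarrow> 'a) \<Rightarrow> bool" where
  "cw_structure X \<C> d \<Phi> \<longleftrightarrow>
     pairwise disjnt \<C> \<and> \<Union>\<C> = topspace X \<and> {} \<notin> \<C> \<and>
     (\<forall>C\<in>\<C>. continuous_map (disc_top (d C)) X (\<Phi> C) \<and>
        homeomorphic_map (subtopology (disc_top (d C)) (odisc (d C))) (subtopology X C) (\<Phi> C) \<and>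
        (\<exists>\<D>. finite \<D> \<and> \<D> \<subseteq> \<C> \<and> (\<forall>D\<in>\<D>. d D < d C) \<and> \<Phi> C ` bsphere (d C) \<subseteq> \<Union>\<D>)) \<and>
     (\<forall>S. S \<subseteq> topspace X \<longrightarrow>
        (closedin X S \<longleftrightarrow> (\<forall>C\<in>\<C>. closedin (disc_top (d C)) {v \<in> disc (d C). \<Phi> C v \<in> S})))"

definition cellular_space :: "'a topology \<Rightarrow> 'a \<Rightarrow> bool" where
  "cellular_space X x0 \<longleftrightarrow> Hausdorff_space X \<and>
     (\<exists>\<C> d \<Phi>. cw_structure X \<C> d \<Phi> \<and> {x0} \<in> \<C> \<and> d {x0} = 0)"

text \<open>Based maps X -> Y; maps are represented extensionally (undefined off topspace X).\<close>
definition based_maps :: "'a topology \<Rightarrow> 'a \<Rightarrow> 'c topology \<Rightarrow> 'c \<Rightarrow> ('a \<Rightarrow> 'c) set" where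
  "based_maps X x0 Y y0 = {f. continuous_map X Y f \<and> f x0 = y0 \<and> f \<in> extensional (topspace X)}"

definition const_map :: "'a topology \<Rightarrow> 'c \<Rightarrow> 'a \<Rightarrow> 'c" where
  "const_map X y0 = restrict (\<lambda>_. y0) (topspace X)"

definition compact_open :: "'a topology \<Rightarrow> 'a \<Rightarrow> 'c topology \<Rightarrow> 'c \<Rightarrow> ('a \<Rightarrow> 'c) topology" where
  "compact_open X x0 Y y0 = topology_generated_by
     {{f \<in> based_maps X x0 Y y0. f ` K \<subseteq> U} | K U. compactin X K \<and> openin Y U}"

definition unbased_maps :: "'u topology \<Rightarrow> 'v topology \<Rightarrow> ('u \<Rightarrow> 'v) set" where
  "unbased_maps U V = {w. continuous_map U V w \<and> w \<in> extensional (topspace U)}"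

definition Xi :: "'u topology \<Rightarrow> 'v \<Rightarrow> 'u \<Rightarrow> 'v" where
  "Xi U v = restrict (\<lambda>_. v) (topspace U)"

definition restr :: "'a set \<Rightarrow> (('a \<Rightarrow> 'c) \<Rightarrow>\<^sub>0 int) \<Rightarrow> (('a \<Rightarrow> 'c) \<Rightarrow>\<^sub>0 int)" where
  "restr R V = linext (\<lambda>f. restrict f R) V"

definition Fsets :: "'a topology \<Rightarrow> 'a \<Rightarrow> nat \<Rightarrow> 'a set set" where
  "Fsets X x0 n = {R. finite R \<and> R \<subseteq> topspace X \<and> x0 \<in> R \<and> card R \<le> n + 1}"

text \<open><Y^X>^(s), for s \<ge> 1 (only used in that case).\<close>
definition filt :: "'a topology \<Rightarrow> 'a \<Rightarrow> 'c topology \<Rightarrow> 'c \<Rightarrow> nat \<Rightarrow> (('a \<Rightarrow> 'c) \<Rightarrow>\<^sub>0 int) set" where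
  "filt X x0 Y y0 s = {V \<in> fag (based_maps X x0 Y y0). \<forall>R\<in>Fsets X x0 (s - 1). restr R V = 0}"

text \<open>The face Delta F of the simplex Delta E (points are extensional functions on E).\<close>
definition face :: "'e set \<Rightarrow> 'e set \<Rightarrow> ('e \<Rightarrow> real) set" where
  "face E F = {t \<in> (\<Pi>\<^sub>E e\<in>E. UNIV). (\<forall>e\<in>E. 0 \<le> t e) \<and> (\<forall>e\<in>E - F. t e = 0) \<and> sum t E = 1}"

definition simplex_top :: "'e set \<Rightarrow> ('e \<Rightarrow> real) topology" where
  "simplex_top E = subtopology (product_topology (\<lambda>_. euclideanreal) E) (face E E)"

definition layouts :: "'e set \<Rightarrow> 'e set set set" where
  "layouts E = {A. (\<forall>F\<in>A. F \<subseteq> E \<and> F \<noteq> {}) \<and> pairwise disjnt A}"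

definition glue :: "'k set \<Rightarrow> ('k \<Rightarrow> 'u set) \<Rightarrow> ('k \<Rightarrow> 'u \<Rightarrow> 'v) \<Rightarrow> 'u \<Rightarrow> 'v" where
  "glue A U c = (\<lambda>x. if \<exists>k\<in>A. x \<in> U k then c (SOME k. k \<in> A \<and> x \<in> U k) x else undefined)"

definition boxprod :: "'k set \<Rightarrow> ('k \<Rightarrow> 'u set) \<Rightarrow> ('k \<Rightarrow> (('u \<Rightarrow> 'v) \<Rightarrow>\<^sub>0 int)) \<Rightarrow> (('u \<Rightarrow> 'v) \<Rightarrow>\<^sub>0 int)" where
  "boxprod A U V = (\<Sum>c\<in>(\<Pi>\<^sub>E k\<in>A. Poly_Mapping.keys (V k)).
      Poly_Mapping.single (glue A U c) (\<Prod>k\<in>A. Poly_Mapping.lookup (V k) (c k)))"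

definition fissile :: "'e set \<Rightarrow> ((('e \<Rightarrow> real) \<Rightarrow> 'v) \<Rightarrow>\<^sub>0 int) \<Rightarrow> bool" where
  "fissile E S \<longleftrightarrow> (\<forall>A\<in>layouts E.
      restr (\<Union>F\<in>A. face E F) S = boxprod A (face E) (\<lambda>F. restr (face E F) S))"

text \<open>Points of U \<wr> X: None is the collapsed U \<times> {x0}, Some (u,x) for x \<noteq> x0.\<close>
definition wr_proj :: "'a \<Rightarrow> 'u \<times> 'a \<Rightarrow> ('u \<times> 'a) option" where
  "wr_proj x0 p = (if snd p = x0 then None else Some p)"

definition wr_top :: "'u topology \<Rightarrow> 'a topology \<Rightarrow> 'a \<Rightarrow> ('u \<times> 'a) option topology" where
  "wr_top U X x0 = quotient_top (prod_topology U X) (wr_proj x0)"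

definition sharp :: "'u topology \<Rightarrow> 'a topology \<Rightarrow> 'a \<Rightarrow> 'c \<Rightarrow> ('u \<Rightarrow> 'a \<Rightarrow> 'c) \<Rightarrow> ('u \<times> 'a) option \<Rightarrow> 'c" where
  "sharp U X x0 y0 w = restrict (\<lambda>p. case p of None \<Rightarrow> y0 | Some (u, x) \<Rightarrow> w u x)
      (wr_proj x0 ` (topspace U \<times> topspace X))"

definition filtX :: "'u topology \<Rightarrow> 'a topology \<Rightarrow> 'a \<Rightarrow> 'c topology \<Rightarrow> 'c \<Rightarrow> nat
    \<Rightarrow> (('u \<Rightarrow> 'a \<Rightarrow> 'c) \<Rightarrow>\<^sub>0 int) set" where
  "filtX U X x0 Y y0 s = {V \<in> fag (unbased_maps U (compact_open X x0 Y y0)).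
      linext (sharp U X x0 y0) V \<in> filt (wr_top U X x0) None Y y0 s}"

text \<open>a \<approx>r b. Nonempty finite index sets E are taken as subsets of nat (no loss).\<close>
definition strongly_similar :: "'a topology \<Rightarrow> 'a \<Rightarrow> 'c topology \<Rightarrow> 'c \<Rightarrow> nat
    \<Rightarrow> ('a \<Rightarrow> 'c) \<Rightarrow> ('a \<Rightarrow> 'c) \<Rightarrow> bool" where
  "strongly_similar X x0 Y y0 r a b \<longleftrightarrow>
     (\<forall>E::nat set. finite E \<and> E \<noteq> {} \<longrightarrow>
       (\<exists>S. S \<in> fag (unbased_maps (simplex_top E)
                (subtopology (compact_open X x0 Y y0) (path_component_of_set (compact_open X x0 Y y0) a)))
          \<and> fissile E S
          \<and> gen (Xi (simplex_top E) b) - S \<in> filtX (simplex_top E) X x0 Y y0 (r + 1)))"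

end

theory Submission
  imports Defs
begin

text \<open>Take fissile witnesses S1, S2 of the two similarities and wedge them pointwise, extending
  bilinearly to formal sums: S = S1 \<or> S2. For compact Hausdorff X1, X2 wedging is continuous on
  the compact-open mapping spaces, so it carries paths from the constant maps to paths from the
  constant map, and it commutes with restriction to faces of the simplex, so S is again fissile.
  Finally \<open>\<langle>a1 \<or> a2\<rangle> - S = (\<langle>a1\<rangle> - S1) \<or> \<langle>a2\<rangle> + S1 \<or> (\<langle>a2\<rangle> - S2)\<close>, and the filtration is an
  ideal for this product: a finite subset R of U \<wr> (X1 \<or> X2) only meets U \<wr> X1 and U \<wr> X2 in
  its projections, which contain the basepoint and are no larger than R.\<close>

section \<open>Linear and bilinear extension to free abelian groups\<close>

lemma keys_gen [simp]: "Poly_Mapping.keys (gen w) = {w}"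
  by (simp add: gen_def)

lemma fag_add: "V \<in> fag W \<Longrightarrow> V' \<in> fag W \<Longrightarrow> V + V' \<in> fag W"
  unfolding fag_def using keys_add[of V V'] by blast

lemma single_sum:
  "Poly_Mapping.single k (sum f I) = (\<Sum>i\<in>I. Poly_Mapping.single k (f i))"
  by (induction I rule: infinite_finite_induct) (auto simp: single_add)

lemma keys_sum_single: "Poly_Mapping.keys (\<Sum>i\<in>I. Poly_Mapping.single (h i) (p i)) \<subseteq> h ` I"
proof -
  have "Poly_Mapping.keys (\<Sum>i\<in>I. Poly_Mapping.single (h i) (p i))
      \<subseteq> (\<Union>i\<in>I. Poly_Mapping.keys (Poly_Mapping.single (h i) (p i)))"
    by (rule keys_sum)
  then show ?thesis
    by auto
qed

lemma lookup_sum_single: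
  "finite I \<Longrightarrow> Poly_Mapping.lookup (\<Sum>i\<in>I. Poly_Mapping.single (h i) (p i)) w = (\<Sum>i | i \<in> I \<and> h i = w. p i)"
  by (simp add: lookup_sum lookup_single when_def sum.inter_filter[symmetric])

lemma linext_eq_sum:
  assumes "finite T" "Poly_Mapping.keys V \<subseteq> T"
  shows "linext f V = (\<Sum>w\<in>T. Poly_Mapping.single (f w) (Poly_Mapping.lookup V w))"
  unfolding linext_def using assms
  by (intro sum.mono_neutral_left) (auto simp: in_keys_iff)

lemma linext_add: "linext f (V + W) = linext f V + linext f W"
proof -
  let ?T = "Poly_Mapping.keys V \<union> Poly_Mapping.keys W"
  have "linext f (V + W) = (\<Sum>w\<in>?T. Poly_Mapping.single (f w) (Poly_Mapping.lookup (V + W) w))"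
    by (rule linext_eq_sum) (auto simp: keys_add)
  also have "\<dots> = linext f V + linext f W"
    by (simp add: lookup_add single_add sum.distrib linext_eq_sum[symmetric])
  finally show ?thesis .
qed

lemma linext_zero [simp]: "linext f 0 = 0"
  by (simp add: linext_def)

lemma linext_single [simp]:
  "linext f (Poly_Mapping.single w c) = Poly_Mapping.single (f w) c"
  by (cases "c = 0") (simp_all add: linext_def)

lemma linext_sum: "linext f (sum F I) = (\<Sum>i\<in>I. linext f (F i))"
  by (induction I rule: infinite_finite_induct) (auto simp: linext_add)

lemma keys_linext: "Poly_Mapping.keys (linext f V) \<subseteq> f ` Poly_Mapping.keys V"
  unfolding linext_def by (rule keys_sum_single)

lemma linext_in_fag: "V \<in> fag A \<Longrightarrow> f ` A \<subseteq> B \<Longrightarrow> linext f V \<in> fag B"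
  unfolding fag_def using keys_linext by fastforce

lemma restr_add: "restr R (V + V') = restr R V + restr R V'"
  unfolding restr_def by (rule linext_add)

definition bilext ::
    "('a \<Rightarrow> 'b \<Rightarrow> 'c) \<Rightarrow> ('a \<Rightarrow>\<^sub>0 int) \<Rightarrow> ('b \<Rightarrow>\<^sub>0 int) \<Rightarrow> ('c \<Rightarrow>\<^sub>0 int)" where
  "bilext \<phi> P Q = (\<Sum>f\<in>Poly_Mapping.keys P. \<Sum>g\<in>Poly_Mapping.keys Q.
      Poly_Mapping.single (\<phi> f g) (Poly_Mapping.lookup P f * Poly_Mapping.lookup Q g))"

lemma bilext_eq_sum:
  assumes "finite TP" "Poly_Mapping.keys P \<subseteq> TP" "finite TQ" "Poly_Mapping.keys Q \<subseteq> TQ"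
  shows "bilext \<phi> P Q = (\<Sum>f\<in>TP. \<Sum>g\<in>TQ.
      Poly_Mapping.single (\<phi> f g) (Poly_Mapping.lookup P f * Poly_Mapping.lookup Q g))"
proof -
  have "bilext \<phi> P Q = (\<Sum>f\<in>Poly_Mapping.keys P. \<Sum>g\<in>TQ.
      Poly_Mapping.single (\<phi> f g) (Poly_Mapping.lookup P f * Poly_Mapping.lookup Q g))"
    unfolding bilext_def using assms
    by (intro sum.cong refl sum.mono_neutral_left) (auto simp: in_keys_iff)
  also have "\<dots> = (\<Sum>f\<in>TP. \<Sum>g\<in>TQ.
      Poly_Mapping.single (\<phi> f g) (Poly_Mapping.lookup P f * Poly_Mapping.lookup Q g))"
    using assms by (intro sum.mono_neutral_left) (auto simp: in_keys_iff)
  finally show ?thesis .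
qed

lemma bilext_add_left: "bilext \<phi> (P + P') Q = bilext \<phi> P Q + bilext \<phi> P' Q"
proof -
  let ?T = "Poly_Mapping.keys P \<union> Poly_Mapping.keys P'" and ?TQ = "Poly_Mapping.keys Q"
  have "bilext \<phi> (P + P') Q = (\<Sum>f\<in>?T. \<Sum>g\<in>?TQ.
      Poly_Mapping.single (\<phi> f g) (Poly_Mapping.lookup (P + P') f * Poly_Mapping.lookup Q g))"
    by (rule bilext_eq_sum) (auto simp: keys_add)
  also have "\<dots> = bilext \<phi> P Q + bilext \<phi> P' Q"
    by (simp add: lookup_add single_add sum.distrib distrib_right bilext_eq_sum[symmetric])
  finally show ?thesis .
qed

lemma bilext_add_right: "bilext \<phi> P (Q + Q') = bilext \<phi> P Q + bilext \<phi> P Q'"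
proof -
  let ?TP = "Poly_Mapping.keys P" and ?T = "Poly_Mapping.keys Q \<union> Poly_Mapping.keys Q'"
  have "bilext \<phi> P (Q + Q') = (\<Sum>f\<in>?TP. \<Sum>g\<in>?T.
      Poly_Mapping.single (\<phi> f g) (Poly_Mapping.lookup P f * Poly_Mapping.lookup (Q + Q') g))"
    by (rule bilext_eq_sum) (auto simp: keys_add)
  also have "\<dots> = bilext \<phi> P Q + bilext \<phi> P Q'"
    by (simp add: lookup_add single_add sum.distrib distrib_left bilext_eq_sum[symmetric])
  finally show ?thesis .
qed

lemma bilext_diff_left: "bilext \<phi> (P - P') Q = bilext \<phi> P Q - bilext \<phi> P' Q"
  by (metis add_diff_cancel bilext_add_left diff_add_cancel)

lemma bilext_diff_right: "bilext \<phi> P (Q - Q') = bilext \<phi> P Q - bilext \<phi> P Q'"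
  by (metis add_diff_cancel bilext_add_right diff_add_cancel)

lemma bilext_zero_left [simp]: "bilext \<phi> 0 Q = 0"
  by (simp add: bilext_def)

lemma bilext_zero_right [simp]: "bilext \<phi> P 0 = 0"
  by (simp add: bilext_def)

lemma bilext_single [simp]:
  "bilext \<phi> (Poly_Mapping.single a p) (Poly_Mapping.single b q) = Poly_Mapping.single (\<phi> a b) (p * q)"
  by (cases "p = 0"; cases "q = 0") (simp_all add: bilext_def)

lemma bilext_sum_left: "bilext \<phi> (sum F I) Q = (\<Sum>i\<in>I. bilext \<phi> (F i) Q)"
  by (induction I rule: infinite_finite_induct) (auto simp: bilext_add_left)

lemma bilext_sum_right: "bilext \<phi> P (sum F I) = (\<Sum>i\<in>I. bilext \<phi> P (F i))"
  by (induction I rule: infinite_finite_induct) (auto simp: bilext_add_right)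

lemma bilext_sum_single:
  "bilext \<phi> (\<Sum>i\<in>I. Poly_Mapping.single (a i) (p i)) (\<Sum>j\<in>J. Poly_Mapping.single (b j) (q j))
   = (\<Sum>i\<in>I. \<Sum>j\<in>J. Poly_Mapping.single (\<phi> (a i) (b j)) (p i * q j))"
  by (simp add: bilext_sum_left bilext_sum_right sum.swap[of _ J])

lemma keys_bilext:
  "Poly_Mapping.keys (bilext \<phi> P Q) \<subseteq> (\<lambda>(f, g). \<phi> f g) ` (Poly_Mapping.keys P \<times> Poly_Mapping.keys Q)"
  unfolding bilext_def by (fastforce dest!: subsetD[OF keys_sum] split: if_splits)

lemma bilext_in_fag:
  assumes "P \<in> fag A" "Q \<in> fag B" "\<And>f g. f \<in> A \<Longrightarrow> g \<in> B \<Longrightarrow> \<phi> f g \<in> C"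
  shows "bilext \<phi> P Q \<in> fag C"
  using assms keys_bilext[of \<phi> P Q] unfolding fag_def by fastforce

lemma linext_bilext:
  assumes "\<And>f g. f \<in> Poly_Mapping.keys P \<Longrightarrow> g \<in> Poly_Mapping.keys Q \<Longrightarrow> h (\<phi> f g) = \<psi> (h1 f) (h2 g)"
  shows "linext h (bilext \<phi> P Q) = bilext \<psi> (linext h1 P) (linext h2 Q)"
proof -
  have "linext h (bilext \<phi> P Q) = (\<Sum>f\<in>Poly_Mapping.keys P. \<Sum>g\<in>Poly_Mapping.keys Q.
      Poly_Mapping.single (\<psi> (h1 f) (h2 g)) (Poly_Mapping.lookup P f * Poly_Mapping.lookup Q g))"
    unfolding bilext_def linext_sum using assms by (intro sum.cong refl) simp
  also have "\<dots> = bilext \<psi> (linext h1 P) (linext h2 Q)"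
    unfolding linext_def[of h1] linext_def[of h2] by (rule bilext_sum_single[symmetric])
  finally show ?thesis .
qed

section \<open>The combining product\<close>

lemma glue_apply: "\<exists>k\<in>A. x \<in> U k \<Longrightarrow> glue A U c x = c (SOME k. k \<in> A \<and> x \<in> U k) x"
  by (simp add: glue_def)

lemma glue_cong: "(\<And>k. k \<in> A \<Longrightarrow> d k = d' k) \<Longrightarrow> glue A U d = glue A U d'"
  unfolding glue_def by (rule ext) (smt (verit, best) someI_ex)

lemma boxprod_cong: "(\<And>k. k \<in> A \<Longrightarrow> V k = V' k) \<Longrightarrow> boxprod A U V = boxprod A U V'"
  unfolding boxprod_def by (intro sum.cong PiE_cong arg_cong2[where f = Poly_Mapping.single] prod.cong)
    (auto simp: PiE_iff)

lemma boxprod_eq_sum: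
  assumes "finite A" "\<And>k. k \<in> A \<Longrightarrow> finite (T k)" "\<And>k. k \<in> A \<Longrightarrow> Poly_Mapping.keys (V k) \<subseteq> T k"
  shows "boxprod A U V =
    (\<Sum>d\<in>PiE A T. Poly_Mapping.single (glue A U d) (\<Prod>k\<in>A. Poly_Mapping.lookup (V k) (d k)))"
  unfolding boxprod_def
proof (rule sum.mono_neutral_left)
  show "finite (PiE A T)" using assms by (simp add: finite_PiE)
  show "PiE A (\<lambda>k. Poly_Mapping.keys (V k)) \<subseteq> PiE A T" using assms by (auto simp: PiE_iff)
  show "\<forall>d\<in>PiE A T - PiE A (\<lambda>k. Poly_Mapping.keys (V k)).
     Poly_Mapping.single (glue A U d) (\<Prod>k\<in>A. Poly_Mapping.lookup (V k) (d k)) = 0"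
  proof
    fix d assume "d \<in> PiE A T - PiE A (\<lambda>k. Poly_Mapping.keys (V k))"
    then obtain k where "k \<in> A" "d k \<notin> Poly_Mapping.keys (V k)" by (auto simp: PiE_iff)
    then have "(\<Prod>k\<in>A. Poly_Mapping.lookup (V k) (d k)) = 0"
      using assms(1) by (intro prod_zero) (auto simp: in_keys_iff)
    then show "Poly_Mapping.single (glue A U d) (\<Prod>k\<in>A. Poly_Mapping.lookup (V k) (d k)) = 0"
      by simp
  qed
qed

lemma boxprod_sum:
  assumes A: "finite A" and I: "\<And>k. k \<in> A \<Longrightarrow> finite (I k)"
    and V: "\<And>k. k \<in> A \<Longrightarrow> V k = (\<Sum>i\<in>I k. Poly_Mapping.single (h k i) (p k i))"
  shows "boxprod A U V =
    (\<Sum>c\<in>PiE A I. Poly_Mapping.single (glue A U (\<lambda>k. h k (c k))) (\<Prod>k\<in>A. p k (c k)))"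
proof -
  define T where "T k = h k ` I k" for k
  define fib where "fib d k = {i \<in> I k. h k i = d k}" for d k
  have finT: "finite (T k)" if "k \<in> A" for k
    using I[OF that] by (simp add: T_def)
  have keysV: "Poly_Mapping.keys (V k) \<subseteq> T k" if "k \<in> A" for k
    unfolding V[OF that] T_def by (rule keys_sum_single)
  have lookupV: "Poly_Mapping.lookup (V k) (d k) = (\<Sum>i\<in>fib d k. p k i)" if "k \<in> A" for d k
    unfolding V[OF that] fib_def using I[OF that] by (simp add: lookup_sum_single)
  have fibre: "Poly_Mapping.single (glue A U d) (\<Prod>k\<in>A. \<Sum>i\<in>fib d k. p k i)
      = (\<Sum>c\<in>PiE A (fib d). Poly_Mapping.single (glue A U (\<lambda>k. h k (c k))) (\<Prod>k\<in>A. p k (c k)))"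
    for d
  proof -
    have "(\<Prod>k\<in>A. \<Sum>i\<in>fib d k. p k i) = (\<Sum>c\<in>PiE A (fib d). \<Prod>k\<in>A. p k (c k))"
      using A I by (intro prod_sum_PiE) (auto simp: fib_def)
    then show ?thesis
      by (simp add: single_sum, intro sum.cong refl arg_cong2[where f = Poly_Mapping.single] glue_cong)
        (auto simp: fib_def PiE_iff)
  qed
  let ?g = "\<lambda>c. restrict (\<lambda>k. h k (c k)) A"
  have fin: "finite (PiE A I)" "finite (PiE A T)"
    using A I finT by (auto simp: finite_PiE)
  have into: "?g ` PiE A I \<subseteq> PiE A T"
    by (auto simp: T_def PiE_iff)
  have fibres: "{c \<in> PiE A I. ?g c = d} = PiE A (fib d)" if "d \<in> PiE A T" for d
    using that by (auto simp: PiE_iff fib_def extensional_def fun_eq_iff)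
  have "boxprod A U V =
      (\<Sum>d\<in>PiE A T. Poly_Mapping.single (glue A U d) (\<Prod>k\<in>A. \<Sum>i\<in>fib d k. p k i))"
    by (simp add: boxprod_eq_sum[OF A finT keysV] lookupV cong: prod.cong)
  also have "\<dots> = (\<Sum>d\<in>PiE A T. \<Sum>c\<in>{c \<in> PiE A I. ?g c = d}.
      Poly_Mapping.single (glue A U (\<lambda>k. h k (c k))) (\<Prod>k\<in>A. p k (c k)))"
    by (simp add: fibre fibres)
  also have "\<dots> = (\<Sum>c\<in>PiE A I. Poly_Mapping.single (glue A U (\<lambda>k. h k (c k))) (\<Prod>k\<in>A. p k (c k)))"
    by (rule sum.group[OF fin into])
  finally show ?thesis .
qed

lemma bij_betw_PiE_Times:
  "bij_betw (\<lambda>c. (restrict (\<lambda>k. fst (c k)) A, restrict (\<lambda>k. snd (c k)) A))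
     (PiE A (\<lambda>k. I k \<times> J k)) (PiE A I \<times> PiE A J)"
  by (rule bij_betw_byWitness[where f' = "\<lambda>cc. restrict (\<lambda>k. (fst cc k, snd cc k)) A"])
    (auto simp: PiE_iff extensional_def fun_eq_iff mem_Times_iff)

lemma boxprod_bilext:
  assumes A: "finite A"
    and glue: "\<And>c1 c2. glue A U (\<lambda>k. \<phi> k (c1 k) (c2 k)) = \<psi> (glue A U c1) (glue A U c2)"
  shows "boxprod A U (\<lambda>k. bilext (\<phi> k) (P k) (Q k)) = bilext \<psi> (boxprod A U P) (boxprod A U Q)"
proof -
  let ?KP = "\<lambda>k. Poly_Mapping.keys (P k)" and ?KQ = "\<lambda>k. Poly_Mapping.keys (Q k)"
  let ?G = "\<lambda>c1 c2. Poly_Mapping.single (\<psi> (glue A U c1) (glue A U c2))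
      ((\<Prod>k\<in>A. Poly_Mapping.lookup (P k) (c1 k)) * (\<Prod>k\<in>A. Poly_Mapping.lookup (Q k) (c2 k)))"
  have "boxprod A U (\<lambda>k. bilext (\<phi> k) (P k) (Q k)) =
     (\<Sum>c\<in>PiE A (\<lambda>k. ?KP k \<times> ?KQ k). Poly_Mapping.single (glue A U (\<lambda>k. \<phi> k (fst (c k)) (snd (c k))))
        (\<Prod>k\<in>A. Poly_Mapping.lookup (P k) (fst (c k)) * Poly_Mapping.lookup (Q k) (snd (c k))))"
    by (rule boxprod_sum[OF A])
      (simp_all add: bilext_def sum.cartesian_product case_prod_beta)
  also have "\<dots> = (\<Sum>c\<in>PiE A (\<lambda>k. ?KP k \<times> ?KQ k).
      ?G (restrict (\<lambda>k. fst (c k)) A) (restrict (\<lambda>k. snd (c k)) A))"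
    by (intro sum.cong refl arg_cong2[where f = Poly_Mapping.single])
      (simp_all add: glue[symmetric] prod.distrib cong: glue_cong)
  also have "\<dots> = (\<Sum>cc\<in>PiE A ?KP \<times> PiE A ?KQ. ?G (fst cc) (snd cc))"
    using sum.reindex_bij_betw[OF bij_betw_PiE_Times[of A ?KP ?KQ], of "\<lambda>cc. ?G (fst cc) (snd cc)"] by simp
  also have "\<dots> = bilext \<psi> (boxprod A U P) (boxprod A U Q)"
    unfolding boxprod_def bilext_sum_single by (simp add: sum.cartesian_product case_prod_beta)
  finally show ?thesis .
qed

section \<open>Quotients, disjoint unions and wedges\<close>

lemma istopology_quotient_top:
  "istopology (\<lambda>S. S \<subseteq> q ` topspace X \<and> openin X {x \<in> topspace X. q x \<in> S})"
proof -
  have "{x \<in> topspace X. q x \<in> S \<inter> T} = {x \<in> topspace X. q x \<in> S} \<inter> {x \<in> topspace X. q x \<in> T}"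
       "{x \<in> topspace X. q x \<in> \<Union>K} = (\<Union>S\<in>K. {x \<in> topspace X. q x \<in> S})" for S T K
    by auto
  then show ?thesis
    unfolding istopology_def by (auto intro!: openin_Int openin_Union)
qed

lemma openin_quotient_top:
  "openin (quotient_top X q) S \<longleftrightarrow> S \<subseteq> q ` topspace X \<and> openin X {x \<in> topspace X. q x \<in> S}"
  unfolding quotient_top_def topology_inverse'[OF istopology_quotient_top] ..

lemma topspace_quotient_top: "topspace (quotient_top X q) = q ` topspace X"
proof -
  have "{x \<in> topspace X. q x \<in> q ` topspace X} = topspace X" by auto
  then have "q ` topspace X \<subseteq> topspace (quotient_top X q)"
    by (intro openin_subset) (simp add: openin_quotient_top)
  moreover have "topspace (quotient_top X q) \<subseteq> q ` topspace X"
    using openin_topspace[of "quotient_top X q"] unfolding openin_quotient_top by blast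
  ultimately show ?thesis by blast
qed

lemma continuous_map_from_quotient_top:
  "continuous_map X Z (g \<circ> q) \<Longrightarrow> continuous_map (quotient_top X q) Z g"
  by (rule continuous_compose_quotient_map)
    (auto simp: quotient_map_def topspace_quotient_top openin_quotient_top)

lemma istopology_disj_union_top:
  "istopology (\<lambda>S. S \<subseteq> Inl ` topspace X1 \<union> Inr ` topspace X2
      \<and> openin X1 (Inl -` S) \<and> openin X2 (Inr -` S))"
  unfolding istopology_def vimage_Int vimage_Union
  by (auto intro!: openin_Int openin_Union)

lemma openin_disj_union_top:
  "openin (disj_union_top X1 X2) S \<longleftrightarrow>
     S \<subseteq> Inl ` topspace X1 \<union> Inr ` topspace X2 \<and> openin X1 (Inl -` S) \<and> openin X2 (Inr -` S)"
  unfolding disj_union_top_def topology_inverse'[OF istopology_disj_union_top] ..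

lemma topspace_disj_union_top:
  "topspace (disj_union_top X1 X2) = Inl ` topspace X1 \<union> Inr ` topspace X2"
proof -
  have "Inl -` (Inl ` topspace X1 \<union> Inr ` topspace X2) = topspace X1"
       "Inr -` (Inl ` topspace X1 \<union> Inr ` topspace X2) = topspace X2" by auto
  then have "Inl ` topspace X1 \<union> Inr ` topspace X2 \<subseteq> topspace (disj_union_top X1 X2)"
    by (intro openin_subset) (simp add: openin_disj_union_top)
  moreover have "topspace (disj_union_top X1 X2) \<subseteq> Inl ` topspace X1 \<union> Inr ` topspace X2"
    using openin_topspace[of "disj_union_top X1 X2"] unfolding openin_disj_union_top by blast
  ultimately show ?thesis by blast
qed

lemma continuous_map_from_disj_union_top:
  assumes "continuous_map X1 Z (g \<circ> Inl)" "continuous_map X2 Z (g \<circ> Inr)"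
  shows "continuous_map (disj_union_top X1 X2) Z g"
  unfolding continuous_map_openin_preimage_eq
proof (intro conjI allI impI)
  show "g \<in> topspace (disj_union_top X1 X2) \<rightarrow> topspace Z"
    using assms[THEN continuous_map_image_subset_topspace]
    by (auto simp: topspace_disj_union_top)
  fix V assume V: "openin Z V"
  have "Inl -` (topspace (disj_union_top X1 X2) \<inter> g -` V) = {x \<in> topspace X1. (g \<circ> Inl) x \<in> V}"
       "Inr -` (topspace (disj_union_top X1 X2) \<inter> g -` V) = {x \<in> topspace X2. (g \<circ> Inr) x \<in> V}"
    by (auto simp: topspace_disj_union_top)
  then show "openin (disj_union_top X1 X2) (topspace (disj_union_top X1 X2) \<inter> g -` V)"
    using openin_continuous_map_preimage[OF assms(1) V] openin_continuous_map_preimage[OF assms(2) V]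
    by (simp add: openin_disj_union_top topspace_disj_union_top[symmetric])
qed

lemma wedge_proj_Inl [simp]: "wedge_proj x1 x2 (Inl x) = Inl x"
  by (simp add: wedge_proj_def)

lemma wedge_proj_Inr [simp]: "wedge_proj x1 x2 (Inr x) = (if x = x2 then Inl x1 else Inr x)"
  by (simp add: wedge_proj_def)

lemma topspace_wedge_top:
  assumes "x1 \<in> topspace X1"
  shows "topspace (wedge_top X1 x1 X2 x2) = Inl ` topspace X1 \<union> Inr ` (topspace X2 - {x2})"
  unfolding wedge_top_def topspace_quotient_top topspace_disj_union_top
proof (intro equalityI subsetI)
  fix p assume "p \<in> Inl ` topspace X1 \<union> Inr ` (topspace X2 - {x2})"
  then consider x where "x \<in> topspace X1" "p = Inl x"
    | x where "x \<in> topspace X2" "x \<noteq> x2" "p = Inr x"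
    by blast
  then show "p \<in> wedge_proj x1 x2 ` (Inl ` topspace X1 \<union> Inr ` topspace X2)"
    by cases force+
qed (use assms in auto)

lemma continuous_map_from_wedge_top:
  assumes "continuous_map X1 Z (g \<circ> Inl)" "continuous_map X2 Z (g \<circ> wedge_proj x1 x2 \<circ> Inr)"
  shows "continuous_map (wedge_top X1 x1 X2 x2) Z g"
  unfolding wedge_top_def
  by (rule continuous_map_from_quotient_top continuous_map_from_disj_union_top)+
    (use assms in \<open>simp_all add: comp_def\<close>)

lemma openin_wedge_top:
  assumes "S \<subseteq> topspace (wedge_top X1 x1 X2 x2)"
    "openin X1 {x \<in> topspace X1. Inl x \<in> S}"
    "openin X2 {x \<in> topspace X2. wedge_proj x1 x2 (Inr x) \<in> S}"
  shows "openin (wedge_top X1 x1 X2 x2) S"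
proof -
  let ?P = "{z \<in> topspace (disj_union_top X1 X2). wedge_proj x1 x2 z \<in> S}"
  have "Inl -` ?P = {x \<in> topspace X1. Inl x \<in> S}"
       "Inr -` ?P = {x \<in> topspace X2. wedge_proj x1 x2 (Inr x) \<in> S}"
    by (auto simp: topspace_disj_union_top)
  then have "openin (disj_union_top X1 X2) ?P"
    using assms(2,3) unfolding openin_disj_union_top topspace_disj_union_top[symmetric] by auto
  then show ?thesis
    using assms(1) unfolding wedge_top_def openin_quotient_top topspace_quotient_top by simp
qed

lemma closedin_wedge_top_left:
  assumes "x1 \<in> topspace X1" "closedin X2 {x2}"
  shows "closedin (wedge_top X1 x1 X2 x2) (Inl ` topspace X1)"
proof -
  have "openin (wedge_top X1 x1 X2 x2) (Inr ` (topspace X2 - {x2}))"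
  proof (rule openin_wedge_top)
    have "{x \<in> topspace X2. wedge_proj x1 x2 (Inr x) \<in> Inr ` (topspace X2 - {x2})} = topspace X2 - {x2}"
      by auto
    then show "openin X2 {x \<in> topspace X2. wedge_proj x1 x2 (Inr x) \<in> Inr ` (topspace X2 - {x2})}"
      using assms(2) by (simp add: closedin_def)
    have "{x \<in> topspace X1. Inl x \<in> Inr ` (topspace X2 - {x2})} = {}"
      by auto
    then show "openin X1 {x \<in> topspace X1. Inl x \<in> Inr ` (topspace X2 - {x2})}"
      by (metis openin_empty)
  qed (auto simp: topspace_wedge_top[OF assms(1)])
  moreover have "topspace (wedge_top X1 x1 X2 x2) - Inl ` topspace X1 = Inr ` (topspace X2 - {x2})"
    by (auto simp: topspace_wedge_top[OF assms(1)])
  ultimately show ?thesis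
    by (simp add: closedin_def topspace_wedge_top[OF assms(1)])
qed

lemma closedin_wedge_top_right:
  assumes "x1 \<in> topspace X1" "closedin X1 {x1}"
  shows "closedin (wedge_top X1 x1 X2 x2) (insert (Inl x1) (Inr ` (topspace X2 - {x2})))"
proof -
  have "openin (wedge_top X1 x1 X2 x2) (Inl ` (topspace X1 - {x1}))"
  proof (rule openin_wedge_top)
    have "{x \<in> topspace X1. Inl x \<in> Inl ` (topspace X1 - {x1})} = topspace X1 - {x1}"
      by auto
    then show "openin X1 {x \<in> topspace X1. Inl x \<in> Inl ` (topspace X1 - {x1})}"
      using assms(2) by (metis closedin_def)
    have "{x \<in> topspace X2. wedge_proj x1 x2 (Inr x) \<in> Inl ` (topspace X1 - {x1})} = {}"
      by auto
    then show "openin X2 {x \<in> topspace X2. wedge_proj x1 x2 (Inr x) \<in> Inl ` (topspace X1 - {x1})}"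
      by (metis openin_empty)
  qed (auto simp: topspace_wedge_top[OF assms(1)])
  moreover have "topspace (wedge_top X1 x1 X2 x2) - insert (Inl x1) (Inr ` (topspace X2 - {x2}))
      = Inl ` (topspace X1 - {x1})"
    by (auto simp: topspace_wedge_top[OF assms(1)])
  ultimately show ?thesis
    using assms(1) by (simp add: closedin_def topspace_wedge_top[OF assms(1)])
qed

lemma continuous_map_wedge_retract_left:
  assumes "x1 \<in> topspace X1"
  shows "continuous_map (wedge_top X1 x1 X2 x2) X1 (case_sum (\<lambda>x. x) (\<lambda>_. x1))"
proof (rule continuous_map_from_wedge_top)
  have "case_sum (\<lambda>x. x) (\<lambda>_. x1) \<circ> wedge_proj x1 x2 \<circ> Inr = (\<lambda>_. x1)"
    by (simp add: fun_eq_iff)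
  then show "continuous_map X2 X1 (case_sum (\<lambda>x. x) (\<lambda>_. x1) \<circ> wedge_proj x1 x2 \<circ> Inr)"
    using assms by simp
qed (simp add: comp_def)

lemma continuous_map_wedge_retract_right:
  assumes "x2 \<in> topspace X2"
  shows "continuous_map (wedge_top X1 x1 X2 x2) X2 (case_sum (\<lambda>_. x2) (\<lambda>x. x))"
proof (rule continuous_map_from_wedge_top)
  have "case_sum (\<lambda>_. x2) (\<lambda>x. x) \<circ> wedge_proj x1 x2 \<circ> Inr = (\<lambda>x. x)"
    by (simp add: fun_eq_iff)
  then show "continuous_map X2 X2 (case_sum (\<lambda>_. x2) (\<lambda>x. x) \<circ> wedge_proj x1 x2 \<circ> Inr)"
    by simp
qed (use assms in \<open>simp add: comp_def\<close>)

section \<open>The compact-open topology\<close>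

lemma Union_compact_open_subbasis:
  "\<Union>{{f \<in> based_maps X x0 Y y0. f ` K \<subseteq> U} | K U. compactin X K \<and> openin Y U} = based_maps X x0 Y y0"
proof -
  have "based_maps X x0 Y y0 = {f \<in> based_maps X x0 Y y0. f ` {} \<subseteq> topspace Y}"
    by simp
  then show ?thesis
    by (blast intro: compactin_empty openin_topspace)
qed

lemma topspace_compact_open: "topspace (compact_open X x0 Y y0) = based_maps X x0 Y y0"
  unfolding compact_open_def topology_generated_by_topspace Union_compact_open_subbasis ..

lemma openin_compact_open:
  "compactin X K \<Longrightarrow> openin Y U \<Longrightarrow>
    openin (compact_open X x0 Y y0) {f \<in> based_maps X x0 Y y0. f ` K \<subseteq> U}"
  unfolding compact_open_def by (rule topology_generated_by_Basis) blast

lemma continuous_map_compact_open_based: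
  "continuous_map Z (compact_open X x0 Y y0) w \<Longrightarrow> u \<in> topspace Z \<Longrightarrow> w u \<in> based_maps X x0 Y y0"
  using continuous_map_image_subset_topspace topspace_compact_open by fastforce

text \<open>One half of the exponential law; the tube lemma is what makes it work.\<close>

lemma continuous_map_into_compact_open:
  assumes based: "\<And>u. u \<in> topspace Z \<Longrightarrow> w u \<in> based_maps X x0 Y y0"
    and cont: "continuous_map (prod_topology Z X) Y (\<lambda>(u, x). w u x)"
  shows "continuous_map Z (compact_open X x0 Y y0) w"
  unfolding compact_open_def
proof (rule continuous_on_generated_topo)
  show "w ` topspace Z \<subseteq> \<Union>{{f \<in> based_maps X x0 Y y0. f ` K \<subseteq> U} | K U. compactin X K \<and> openin Y U}"
    unfolding Union_compact_open_subbasis using based by auto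
  fix S assume "S \<in> {{f \<in> based_maps X x0 Y y0. f ` K \<subseteq> U} | K U. compactin X K \<and> openin Y U}"
  then obtain K V where S: "S = {f \<in> based_maps X x0 Y y0. f ` K \<subseteq> V}"
    and K: "compactin X K" and V: "openin Y V"
    by blast
  let ?W = "{z \<in> topspace (prod_topology Z X). (\<lambda>(u, x). w u x) z \<in> V}"
  have W: "openin (prod_topology Z X) ?W"
    using openin_continuous_map_preimage[OF cont V] .
  show "openin Z (w -` S \<inter> topspace Z)"
  proof (subst openin_subopen, intro ballI)
    fix u0 assume u0: "u0 \<in> w -` S \<inter> topspace Z"
    then have "{u0} \<times> K \<subseteq> ?W"
      using compactin_subset_topspace[OF K] by (auto simp: S)
    then obtain U' V' where U': "openin Z U'" "u0 \<in> U'" and "openin X V'" "K \<subseteq> V'" "U' \<times> V' \<subseteq> ?W"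
      using tube_lemma_right[OF W K, of u0] u0 by auto
    then have "w u ` K \<subseteq> V" if "u \<in> U'" for u
      using that by fastforce
    then have "U' \<subseteq> w -` S \<inter> topspace Z"
      using based openin_subset[OF U'(1)] by (auto simp: S)
    then show "\<exists>T. openin Z T \<and> u0 \<in> T \<and> T \<subseteq> w -` S \<inter> topspace Z"
      using U' by blast
  qed
qed

lemma compact_open_eval_neighbourhood:
  assumes cont: "continuous_map Z (compact_open X x0 Y y0) w"
    and lc: "neighbourhood_base_of (compactin X) X" and V: "openin Y V"
    and u: "u \<in> topspace Z" and x: "x \<in> topspace X" and wux: "w u x \<in> V"
  obtains U N where "openin Z U" "openin X N" "u \<in> U" "x \<in> N"
    "U \<times> N \<subseteq> {z \<in> topspace (prod_topology Z X). (\<lambda>(u, x). w u x) z \<in> V}"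
proof -
  have "continuous_map X Y (w u)"
    using continuous_map_compact_open_based[OF cont u] by (simp add: based_maps_def)
  then have "openin X {x \<in> topspace X. w u x \<in> V}"
    using V by (rule openin_continuous_map_preimage)
  moreover have "x \<in> {x \<in> topspace X. w u x \<in> V}"
    using x wux by simp
  ultimately obtain N K where NK: "openin X N" "compactin X K" "x \<in> N" "N \<subseteq> K"
    "K \<subseteq> {x \<in> topspace X. w u x \<in> V}"
    using lc unfolding neighbourhood_base_of by meson
  let ?O = "{u \<in> topspace Z. w u \<in> {f \<in> based_maps X x0 Y y0. f ` K \<subseteq> V}}"
  have "openin Z ?O"
    using openin_continuous_map_preimage[OF cont openin_compact_open[OF NK(2) V]] .
  moreover have "u \<in> ?O"
    using u NK(5) continuous_map_compact_open_based[OF cont u] by auto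
  moreover have "?O \<times> N \<subseteq> {z \<in> topspace (prod_topology Z X). (\<lambda>(u, x). w u x) z \<in> V}"
    using NK(4) compactin_subset_topspace[OF NK(2)] by auto
  ultimately show ?thesis
    using that NK(1,3) by blast
qed

lemma continuous_map_eval_compact_open:
  assumes cont: "continuous_map Z (compact_open X x0 Y y0) w"
    and lc: "neighbourhood_base_of (compactin X) X"
  shows "continuous_map (prod_topology Z X) Y (\<lambda>(u, x). w u x)"
  unfolding continuous_map_def
proof (intro conjI allI impI)
  show "(\<lambda>(u, x). w u x) \<in> topspace (prod_topology Z X) \<rightarrow> topspace Y"
    using continuous_map_compact_open_based[OF cont]
    by (fastforce simp: based_maps_def continuous_map_def)
  fix V assume V: "openin Y V"
  show "openin (prod_topology Z X) {z \<in> topspace (prod_topology Z X). (\<lambda>(u, x). w u x) z \<in> V}"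
  proof (subst openin_subopen, intro ballI)
    fix z assume "z \<in> {z \<in> topspace (prod_topology Z X). (\<lambda>(u, x). w u x) z \<in> V}"
    then obtain u x where z: "z = (u, x)" "u \<in> topspace Z" "x \<in> topspace X" "w u x \<in> V"
      by auto
    obtain U N where "openin Z U" "openin X N" "u \<in> U" "x \<in> N"
      "U \<times> N \<subseteq> {z \<in> topspace (prod_topology Z X). (\<lambda>(u, x). w u x) z \<in> V}"
      using z(2-4) by (rule compact_open_eval_neighbourhood[OF cont lc V])
    then show "\<exists>T. openin (prod_topology Z X) T \<and> z \<in> T \<and>
        T \<subseteq> {z \<in> topspace (prod_topology Z X). (\<lambda>(u, x). w u x) z \<in> V}"
      using z(1) by (intro exI[of _ "U \<times> N"]) (auto simp: openin_prod_Times_iff)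
  qed
qed

lemma continuous_map_uncurry_compose:
  assumes "continuous_map (prod_topology Z X) Y (\<lambda>(u, x). f u x)" "continuous_map W X r"
  shows "continuous_map (prod_topology Z W) Y (\<lambda>(u, p). f u (r p))"
proof -
  have "continuous_map (prod_topology Z W) X (r \<circ> snd)"
    using continuous_map_snd assms(2) by (rule continuous_map_compose)
  then have "continuous_map (prod_topology Z W) (prod_topology Z X) (\<lambda>z. (fst z, (r \<circ> snd) z))"
    by (intro continuous_map_pairedI continuous_map_fst)
  moreover have "(\<lambda>(u, p). f u (r p)) = (\<lambda>(u, x). f u x) \<circ> (\<lambda>z. (fst z, (r \<circ> snd) z))"
    by (auto simp: fun_eq_iff)
  ultimately show ?thesis
    using assms(1) by (simp only: continuous_map_compose)
qed

text \<open>Evaluation on a wedge is glued from evaluations on the two closed pieces, each obtained by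
  composing with the retraction of the wedge onto that piece.\<close>

lemma continuous_map_eval_wedge_top:
  assumes x1: "x1 \<in> topspace X1" and x2: "x2 \<in> topspace X2"
    and c1: "closedin X1 {x1}" and c2: "closedin X2 {x2}"
    and f: "continuous_map (prod_topology Z X1) Y (\<lambda>(u, x). f u x)"
    and g: "continuous_map (prod_topology Z X2) Y (\<lambda>(u, x). g u x)"
    and fg: "\<And>u. u \<in> topspace Z \<Longrightarrow> f u x1 = g u x2"
  shows "continuous_map (prod_topology Z (wedge_top X1 x1 X2 x2)) Y
           (\<lambda>(u, p). case p of Inl x \<Rightarrow> f u x | Inr x \<Rightarrow> g u x)"
proof -
  let ?W = "wedge_top X1 x1 X2 x2"
  define T where "T b = topspace Z \<times> (if b then Inl ` topspace X1
      else insert (Inl x1) (Inr ` (topspace X2 - {x2})))" for b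
  define F where "F b = (if b then (\<lambda>(u, p). f u (case_sum (\<lambda>x. x) (\<lambda>_. x1) p))
      else (\<lambda>(u, p). g u (case_sum (\<lambda>_. x2) (\<lambda>x. x) p)))" for b
  show ?thesis
  proof (rule pasting_lemma_closed[where I = UNIV and T = T and f = F])
    fix b :: bool
    show "closedin (prod_topology Z ?W) (T b)"
      unfolding T_def using closedin_wedge_top_left[OF x1 c2] closedin_wedge_top_right[OF x1 c1, of X2 x2]
      by (simp add: closedin_prod_Times_iff)
    have "continuous_map (prod_topology Z ?W) Y (F b)"
      unfolding F_def
      using continuous_map_uncurry_compose[OF f continuous_map_wedge_retract_left[OF x1, of X2 x2]]
        continuous_map_uncurry_compose[OF g continuous_map_wedge_retract_right[OF x2, of X1 x1]]
      by (cases b) simp_all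
    then show "continuous_map (subtopology (prod_topology Z ?W) (T b)) Y (F b)"
      by (rule continuous_map_from_subtopology)
  next
    fix b b' z assume "z \<in> topspace (prod_topology Z ?W) \<inter> T b \<inter> T b'"
    then show "F b z = F b' z"
      unfolding T_def F_def using fg by (cases b; cases b') auto
  next
    fix z assume "z \<in> topspace (prod_topology Z ?W)"
    then show "\<exists>j. j \<in> UNIV \<and> z \<in> T j \<and>
        (\<lambda>(u, p). case p of Inl x \<Rightarrow> f u x | Inr x \<Rightarrow> g u x) z = F j z"
      unfolding T_def F_def
      by (intro exI[where x = "isl (snd z)"]) (auto simp: topspace_wedge_top[OF x1] split: sum.splits)
  qed simp
qed

section \<open>Wedges of families of maps\<close>

definition pointwise_wedge :: "'a topology \<Rightarrow> 'a \<Rightarrow> 'b topology \<Rightarrow> 'b \<Rightarrow> 'u set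
    \<Rightarrow> ('u \<Rightarrow> 'a \<Rightarrow> 'c) \<Rightarrow> ('u \<Rightarrow> 'b \<Rightarrow> 'c) \<Rightarrow> 'u \<Rightarrow> 'a + 'b \<Rightarrow> 'c" where
  "pointwise_wedge X1 x1 X2 x2 D f g = restrict (\<lambda>u. wedge_map X1 x1 X2 x2 (f u) (g u)) D"

lemma restr_bilext_pointwise_wedge:
  assumes "D \<subseteq> T"
  shows "restr D (bilext (pointwise_wedge X1 x1 X2 x2 T) P Q)
       = bilext (pointwise_wedge X1 x1 X2 x2 D) (restr D P) (restr D Q)"
  unfolding restr_def
  by (rule linext_bilext) (use assms in \<open>auto simp: pointwise_wedge_def fun_eq_iff\<close>)

lemma glue_pointwise_wedge:
  "glue A U (\<lambda>k. pointwise_wedge X1 x1 X2 x2 (U k) (c1 k) (c2 k))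
     = pointwise_wedge X1 x1 X2 x2 (\<Union>k\<in>A. U k) (glue A U c1) (glue A U c2)"
proof
  fix x
  show "glue A U (\<lambda>k. pointwise_wedge X1 x1 X2 x2 (U k) (c1 k) (c2 k)) x
     = pointwise_wedge X1 x1 X2 x2 (\<Union>k\<in>A. U k) (glue A U c1) (glue A U c2) x"
  proof (cases "\<exists>k\<in>A. x \<in> U k")
    case True
    define k0 where "k0 = (SOME k. k \<in> A \<and> x \<in> U k)"
    have "x \<in> U k0"
      unfolding k0_def using True by (metis (mono_tags, lifting) someI_ex)
    then show ?thesis
      using True by (simp add: pointwise_wedge_def glue_apply k0_def[symmetric])
  next
    case False
    then show ?thesis
      unfolding glue_def pointwise_wedge_def by (simp only: if_False) simp
  qed
qed

lemma topspace_simplex_top: "topspace (simplex_top E) = face E E"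
  unfolding simplex_top_def by (auto simp: face_def)

lemma topspace_simplex_top_nonempty:
  assumes "finite E" "E \<noteq> {}"
  shows "topspace (simplex_top E) \<noteq> {}"
proof -
  obtain e where e: "e \<in> E"
    using assms(2) by blast
  have "restrict (\<lambda>i. if i = e then 1 else 0 :: real) E \<in> face E E"
    using e assms(1) by (simp add: face_def)
  then show ?thesis
    unfolding topspace_simplex_top by blast
qed

lemma face_subset_simplex: "face E F \<subseteq> face E E"
  by (auto simp: face_def)

lemma fissile_bilext_pointwise_wedge:
  assumes E: "finite E" and S1: "fissile E S1" and S2: "fissile E S2"
  shows "fissile E (bilext (pointwise_wedge X1 x1 X2 x2 (face E E)) S1 S2)"
  unfolding fissile_def
proof
  fix A assume A: "A \<in> layouts E"
  have "A \<subseteq> Pow E"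
    using A unfolding layouts_def by blast
  then have "finite A"
    using E by (simp add: finite_subset)
  let ?J = "\<lambda>D. pointwise_wedge X1 x1 X2 x2 D" and ?D = "\<Union>F\<in>A. face E F"
  have "restr ?D (bilext (?J (face E E)) S1 S2) = bilext (?J ?D) (restr ?D S1) (restr ?D S2)"
    using face_subset_simplex by (blast intro: restr_bilext_pointwise_wedge)
  also have "\<dots> = bilext (?J ?D) (boxprod A (face E) (\<lambda>F. restr (face E F) S1))
      (boxprod A (face E) (\<lambda>F. restr (face E F) S2))"
    using S1 S2 A unfolding fissile_def by simp
  also have "\<dots> = boxprod A (face E)
      (\<lambda>F. bilext (?J (face E F)) (restr (face E F) S1) (restr (face E F) S2))"
    by (rule boxprod_bilext[where \<phi> = "\<lambda>F. ?J (face E F)" and \<psi> = "?J ?D",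
          OF \<open>finite A\<close> glue_pointwise_wedge, symmetric])
  also have "\<dots> = boxprod A (face E) (\<lambda>F. restr (face E F) (bilext (?J (face E E)) S1 S2))"
    by (intro boxprod_cong restr_bilext_pointwise_wedge[symmetric] face_subset_simplex)
  finally show "restr ?D (bilext (?J (face E E)) S1 S2) =
      boxprod A (face E) (\<lambda>F. restr (face E F) (bilext (?J (face E E)) S1 S2))" .
qed

locale locally_compact_Hausdorff_wedge =
  fixes X1 :: "'a topology" and x1 :: 'a and X2 :: "'b topology" and x2 :: 'b
    and Y :: "'c topology" and y0 :: 'c
  assumes Hausdorff1: "Hausdorff_space X1" and Hausdorff2: "Hausdorff_space X2"
    and locally_compact1: "locally_compact_space X1"
    and locally_compact2: "locally_compact_space X2"
    and x1: "x1 \<in> topspace X1" and x2: "x2 \<in> topspace X2"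
begin

abbreviation "W \<equiv> wedge_top X1 x1 X2 x2"

lemma Inl_x1_in_W: "Inl x1 \<in> topspace W"
  using x1 by (simp add: topspace_wedge_top[OF x1])

lemma continuous_map_eval_wedge_map:
  assumes f: "continuous_map Z (compact_open X1 x1 Y y0) f"
    and g: "continuous_map Z (compact_open X2 x2 Y y0) g"
  shows "continuous_map (prod_topology Z W) Y (\<lambda>(u, p). wedge_map X1 x1 X2 x2 (f u) (g u) p)"
proof -
  have "neighbourhood_base_of (compactin X1) X1" "neighbourhood_base_of (compactin X2) X2"
    using Hausdorff1 Hausdorff2 locally_compact1 locally_compact2
    by (simp_all add: locally_compact_space_neighbourhood_base)
  then have "continuous_map (prod_topology Z X1) Y (\<lambda>(u, x). f u x)"
    and "continuous_map (prod_topology Z X2) Y (\<lambda>(u, x). g u x)"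
    by (simp_all only: continuous_map_eval_compact_open[OF f] continuous_map_eval_compact_open[OF g])
  moreover have "closedin X1 {x1}" "closedin X2 {x2}"
    using Hausdorff1 Hausdorff2 x1 x2 by (simp_all add: Hausdorff_imp_t1_space closedin_t1_singleton)
  moreover have "f u x1 = g u x2" if "u \<in> topspace Z" for u
    using continuous_map_compact_open_based[OF f that] continuous_map_compact_open_based[OF g that]
    by (simp add: based_maps_def)
  ultimately have "continuous_map (prod_topology Z W) Y
      (\<lambda>(u, p). case p of Inl x \<Rightarrow> f u x | Inr x \<Rightarrow> g u x)"
    using x1 x2 by (intro continuous_map_eval_wedge_top) auto
  then show ?thesis
    by (rule continuous_map_eq) (auto simp: wedge_map_def)
qed

lemma wedge_map_in_based_maps:
  assumes f: "continuous_map Z (compact_open X1 x1 Y y0) f"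
    and g: "continuous_map Z (compact_open X2 x2 Y y0) g" and u: "u \<in> topspace Z"
  shows "wedge_map X1 x1 X2 x2 (f u) (g u) \<in> based_maps W (Inl x1) Y y0"
proof -
  have "continuous_map W (prod_topology Z W) (\<lambda>p. (u, p))"
    using u by (intro continuous_map_pairedI) (simp_all add: continuous_map_id[unfolded id_def])
  from continuous_map_compose[OF this continuous_map_eval_wedge_map[OF f g]]
  have "continuous_map W Y (wedge_map X1 x1 X2 x2 (f u) (g u))"
    by (simp add: comp_def)
  moreover have "wedge_map X1 x1 X2 x2 (f u) (g u) (Inl x1) = y0"
    using Inl_x1_in_W continuous_map_compact_open_based[OF f u] by (simp add: wedge_map_def based_maps_def)
  ultimately show ?thesis
    by (simp add: based_maps_def wedge_map_def)
qed

lemma continuous_map_wedge_map_compact_open: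
  assumes "continuous_map Z (compact_open X1 x1 Y y0) f" "continuous_map Z (compact_open X2 x2 Y y0) g"
  shows "continuous_map Z (compact_open W (Inl x1) Y y0) (\<lambda>u. wedge_map X1 x1 X2 x2 (f u) (g u))"
  by (rule continuous_map_into_compact_open[OF wedge_map_in_based_maps[OF assms]
        continuous_map_eval_wedge_map[OF assms]])

lemma pointwise_wedge_in_unbased_maps:
  assumes "f \<in> unbased_maps U (compact_open X1 x1 Y y0)" "g \<in> unbased_maps U (compact_open X2 x2 Y y0)"
  shows "pointwise_wedge X1 x1 X2 x2 (topspace U) f g \<in> unbased_maps U (compact_open W (Inl x1) Y y0)"
proof -
  have "continuous_map U (compact_open W (Inl x1) Y y0) (\<lambda>u. wedge_map X1 x1 X2 x2 (f u) (g u))"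
    using assms unfolding unbased_maps_def by (intro continuous_map_wedge_map_compact_open) auto
  then show ?thesis
    unfolding unbased_maps_def pointwise_wedge_def by (simp add: continuous_map_eq)
qed

lemma wedge_map_const_map: "wedge_map X1 x1 X2 x2 (const_map X1 y0) (const_map X2 y0) = const_map W y0"
  unfolding wedge_map_def const_map_def
  by (rule restrict_ext) (auto simp: topspace_wedge_top[OF x1])

lemma pointwise_wedge_in_path_component:
  assumes f: "f \<in> unbased_maps U (subtopology (compact_open X1 x1 Y y0)
                  (path_component_of_set (compact_open X1 x1 Y y0) (const_map X1 y0)))"
    and g: "g \<in> unbased_maps U (subtopology (compact_open X2 x2 Y y0)
                  (path_component_of_set (compact_open X2 x2 Y y0) (const_map X2 y0)))"
  shows "pointwise_wedge X1 x1 X2 x2 (topspace U) f g \<in> unbased_maps U (subtopology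
           (compact_open W (Inl x1) Y y0)
           (path_component_of_set (compact_open W (Inl x1) Y y0) (const_map W y0)))"
proof -
  have "f \<in> unbased_maps U (compact_open X1 x1 Y y0)" "g \<in> unbased_maps U (compact_open X2 x2 Y y0)"
    and f_pc: "f \<in> topspace U \<rightarrow> path_component_of_set (compact_open X1 x1 Y y0) (const_map X1 y0)"
    and g_pc: "g \<in> topspace U \<rightarrow> path_component_of_set (compact_open X2 x2 Y y0) (const_map X2 y0)"
    using f g unfolding unbased_maps_def continuous_map_in_subtopology by auto
  from this(1,2) have unbased:
    "pointwise_wedge X1 x1 X2 x2 (topspace U) f g \<in> unbased_maps U (compact_open W (Inl x1) Y y0)"
    by (rule pointwise_wedge_in_unbased_maps)
  have "pointwise_wedge X1 x1 X2 x2 (topspace U) f g u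
      \<in> path_component_of_set (compact_open W (Inl x1) Y y0) (const_map W y0)"
    if u: "u \<in> topspace U" for u
  proof -
    obtain \<gamma>1 where \<gamma>1: "pathin (compact_open X1 x1 Y y0) \<gamma>1" "\<gamma>1 0 = const_map X1 y0" "\<gamma>1 1 = f u"
      using f_pc u unfolding path_component_of_def by blast
    obtain \<gamma>2 where \<gamma>2: "pathin (compact_open X2 x2 Y y0) \<gamma>2" "\<gamma>2 0 = const_map X2 y0" "\<gamma>2 1 = g u"
      using g_pc u unfolding path_component_of_def by blast
    have "pathin (compact_open W (Inl x1) Y y0) (\<lambda>t. wedge_map X1 x1 X2 x2 (\<gamma>1 t) (\<gamma>2 t))"
      using \<gamma>1(1) \<gamma>2(1) unfolding pathin_def by (rule continuous_map_wedge_map_compact_open)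
    then show ?thesis
      using \<gamma>1 \<gamma>2 u wedge_map_const_map unfolding path_component_of_def
      by (auto simp: pointwise_wedge_def)
  qed
  then show ?thesis
    using unbased unfolding unbased_maps_def continuous_map_in_subtopology by auto
qed

end

section \<open>Wreath products and the filtration\<close>

lemma fag_mono: "A \<subseteq> B \<Longrightarrow> fag A \<subseteq> fag B"
  unfolding fag_def by blast

lemma topspace_wr_top: "topspace (wr_top U X x0) = wr_proj x0 ` (topspace U \<times> topspace X)"
  by (simp add: wr_top_def topspace_quotient_top)

lemma wr_proj_Pair: "wr_proj x0 (u, x) = (if x = x0 then None else Some (u, x))"
  by (simp add: wr_proj_def)

lemma sharp_Some:
  assumes "u \<in> topspace U" "x \<in> topspace X" "x \<noteq> x0"
  shows "sharp U X x0 y0 w (Some (u, x)) = w u x"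
proof -
  have "Some (u, x) \<in> wr_proj x0 ` (topspace U \<times> topspace X)"
    using assms by (intro image_eqI[where x = "(u, x)"]) (auto simp: wr_proj_Pair)
  then show ?thesis
    unfolding sharp_def by simp
qed

lemma sharp_None:
  assumes "u \<in> topspace U" "x0 \<in> topspace X"
  shows "sharp U X x0 y0 w None = y0"
proof -
  have "None \<in> wr_proj x0 ` (topspace U \<times> topspace X)"
    using assms by (intro image_eqI[where x = "(u, x0)"]) (auto simp: wr_proj_Pair)
  then show ?thesis
    unfolding sharp_def by simp
qed

lemma sharp_in_based_maps:
  assumes cont: "continuous_map (prod_topology U X) Y (\<lambda>(u, x). w u x)"
    and based: "\<And>u. u \<in> topspace U \<Longrightarrow> w u x0 = y0"
    and "u0 \<in> topspace U" "x0 \<in> topspace X"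
  shows "sharp U X x0 y0 w \<in> based_maps (wr_top U X x0) None Y y0"
proof -
  have "continuous_map (prod_topology U X) Y (sharp U X x0 y0 w \<circ> wr_proj x0)"
    using cont by (rule continuous_map_eq)
      (auto simp: wr_proj_Pair sharp_Some sharp_None based assms(4))
  then have "continuous_map (wr_top U X x0) Y (sharp U X x0 y0 w)"
    unfolding wr_top_def by (rule continuous_map_from_quotient_top)
  moreover have "sharp U X x0 y0 w \<in> extensional (topspace (wr_top U X x0))"
    unfolding topspace_wr_top sharp_def by (rule restrict_extensional)
  ultimately show ?thesis
    using sharp_None[OF assms(3,4)] by (simp add: based_maps_def)
qed

lemma Fsets_image:
  assumes "R \<in> Fsets X x0 n" "m ` R \<subseteq> topspace X'"
  shows "m ` R \<in> Fsets X' (m x0) n"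
  using assms card_image_le[of R m] unfolding Fsets_def by auto

lemma filtX_add:
  assumes "V \<in> filtX U X x0 Y y0 s" "V' \<in> filtX U X x0 Y y0 s"
  shows "V + V' \<in> filtX U X x0 Y y0 s"
  using assms unfolding filtX_def filt_def by (auto simp: linext_add restr_add fag_add)

lemma Xi_wedge_map:
  "Xi U (wedge_map X1 x1 X2 x2 a1 a2) = pointwise_wedge X1 x1 X2 x2 (topspace U) (Xi U a1) (Xi U a2)"
  unfolding Xi_def pointwise_wedge_def by (rule restrict_ext) simp

lemma Xi_in_unbased_maps: "a \<in> topspace T \<Longrightarrow> Xi U a \<in> unbased_maps U T"
  unfolding unbased_maps_def Xi_def by (simp add: continuous_map_eq[of U T "\<lambda>_. a"])

text \<open>The wreath U \<wr> (X1 \<or> X2) is the wedge of U \<wr> X1 and U \<wr> X2 at the collapsed point: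
  \<open>wr_join\<close> glues based maps on the two halves, and \<open>wr_left\<close>, \<open>wr_right\<close> are the
  retractions onto them.\<close>

definition wr_join :: "'c \<Rightarrow> (('u \<times> 'a) option \<Rightarrow> 'c) \<Rightarrow> (('u \<times> 'b) option \<Rightarrow> 'c)
    \<Rightarrow> ('u \<times> ('a + 'b)) option \<Rightarrow> 'c" where
  "wr_join y0 h1 h2 p = (case p of None \<Rightarrow> y0
      | Some (u, Inl x) \<Rightarrow> h1 (Some (u, x)) | Some (u, Inr x) \<Rightarrow> h2 (Some (u, x)))"

definition wr_left :: "('u \<times> ('a + 'b)) option \<Rightarrow> ('u \<times> 'a) option" where
  "wr_left p = (case p of Some (u, Inl x) \<Rightarrow> Some (u, x) | _ \<Rightarrow> None)"

definition wr_right :: "('u \<times> ('a + 'b)) option \<Rightarrow> ('u \<times> 'b) option" where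
  "wr_right p = (case p of Some (u, Inr x) \<Rightarrow> Some (u, x) | _ \<Rightarrow> None)"

lemma restrict_wr_join:
  assumes "R \<subseteq> D"
  shows "restrict (restrict (wr_join y0 h1 h2) D) R
       = restrict (wr_join y0 (restrict h1 (wr_left ` R)) (restrict h2 (wr_right ` R))) R"
proof (rule restrict_ext)
  fix p assume "p \<in> R"
  then have "Some (u, x) \<in> wr_left ` R" if "p = Some (u, Inl x)" for u x
    using that by (force simp: wr_left_def)
  moreover have "Some (u, x) \<in> wr_right ` R" if "p = Some (u, Inr x)" for u x
    using that \<open>p \<in> R\<close> by (force simp: wr_right_def)
  ultimately show "restrict (wr_join y0 h1 h2) D p
      = wr_join y0 (restrict h1 (wr_left ` R)) (restrict h2 (wr_right ` R)) p"
    using \<open>p \<in> R\<close> assms by (auto simp: wr_join_def split: option.split sum.split)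
qed

lemma restr_linext_bilext_wr_join:
  assumes "R \<subseteq> D"
  shows "restr R (bilext (\<lambda>h1 h2. restrict (wr_join y0 h1 h2) D) P Q)
       = bilext (\<lambda>h1 h2. restrict (wr_join y0 h1 h2) R) (restr (wr_left ` R) P) (restr (wr_right ` R) Q)"
  unfolding restr_def by (rule linext_bilext) (rule restrict_wr_join[OF assms])

context locally_compact_Hausdorff_wedge
begin

lemma wr_left_in_topspace:
  assumes "p \<in> topspace (wr_top U W (Inl x1))"
  shows "wr_left p \<in> topspace (wr_top U X1 x1)"
proof -
  obtain u q where uq: "u \<in> topspace U" "q \<in> topspace W" "p = wr_proj (Inl x1) (u, q)"
    using assms unfolding topspace_wr_top by auto
  then have "wr_left p = wr_proj x1 (u, case_sum (\<lambda>x. x) (\<lambda>_. x1) q)"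
    by (auto simp: wr_proj_Pair wr_left_def topspace_wedge_top[OF x1] split: sum.split)
  moreover have "case_sum (\<lambda>x. x) (\<lambda>_. x1) q \<in> topspace X1"
    using uq(2) x1 by (auto simp: topspace_wedge_top[OF x1])
  ultimately show ?thesis
    using uq(1) by (simp add: topspace_wr_top)
qed

lemma wr_right_in_topspace:
  assumes "p \<in> topspace (wr_top U W (Inl x1))"
  shows "wr_right p \<in> topspace (wr_top U X2 x2)"
proof -
  obtain u q where uq: "u \<in> topspace U" "q \<in> topspace W" "p = wr_proj (Inl x1) (u, q)"
    using assms unfolding topspace_wr_top by auto
  then have "wr_right p = wr_proj x2 (u, case_sum (\<lambda>_. x2) (\<lambda>x. x) q)"
    by (auto simp: wr_proj_Pair wr_right_def topspace_wedge_top[OF x1] split: sum.split)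
  moreover have "case_sum (\<lambda>_. x2) (\<lambda>x. x) q \<in> topspace X2"
    using uq(2) x2 by (auto simp: topspace_wedge_top[OF x1])
  ultimately show ?thesis
    using uq(1) by (simp add: topspace_wr_top)
qed

lemma sharp_pointwise_wedge:
  "sharp U W (Inl x1) y0 (pointwise_wedge X1 x1 X2 x2 (topspace U) f g)
     = restrict (wr_join y0 (sharp U X1 x1 y0 f) (sharp U X2 x2 y0 g)) (topspace (wr_top U W (Inl x1)))"
  unfolding sharp_def[of U W] topspace_wr_top
proof (rule restrict_ext)
  fix p assume "p \<in> wr_proj (Inl x1) ` (topspace U \<times> topspace W)"
  then obtain u q where uq: "u \<in> topspace U" "q \<in> topspace W" "p = wr_proj (Inl x1) (u, q)"
    by blast
  show "(case p of None \<Rightarrow> y0 | Some (u, x) \<Rightarrow> pointwise_wedge X1 x1 X2 x2 (topspace U) f g u x)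
      = wr_join y0 (sharp U X1 x1 y0 f) (sharp U X2 x2 y0 g) p"
  proof (cases q)
    case (Inl x)
    with uq show ?thesis
      by (auto simp: wr_proj_Pair wr_join_def pointwise_wedge_def wedge_map_def sharp_Some
          topspace_wedge_top[OF x1])
  next
    case (Inr x)
    with uq(2) have "x \<in> topspace X2" "x \<noteq> x2"
      by (auto simp: topspace_wedge_top[OF x1])
    with uq Inr show ?thesis
      by (auto simp: wr_proj_Pair wr_join_def pointwise_wedge_def wedge_map_def sharp_Some)
  qed
qed

lemma sharp_pointwise_wedge_in_based_maps:
  assumes f: "continuous_map U (compact_open X1 x1 Y y0) f"
    and g: "continuous_map U (compact_open X2 x2 Y y0) g" and U: "topspace U \<noteq> {}"
  shows "sharp U W (Inl x1) y0 (pointwise_wedge X1 x1 X2 x2 (topspace U) f g)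
           \<in> based_maps (wr_top U W (Inl x1)) None Y y0"
proof -
  obtain u0 where u0: "u0 \<in> topspace U"
    using U by blast
  have "continuous_map (prod_topology U W) Y (\<lambda>(u, p). pointwise_wedge X1 x1 X2 x2 (topspace U) f g u p)"
    using continuous_map_eval_wedge_map[OF f g]
    by (rule continuous_map_eq) (auto simp: pointwise_wedge_def)
  moreover have "pointwise_wedge X1 x1 X2 x2 (topspace U) f g u (Inl x1) = y0" if "u \<in> topspace U" for u
    using wedge_map_in_based_maps[OF f g that] that by (simp add: pointwise_wedge_def based_maps_def)
  ultimately show ?thesis
    using u0 Inl_x1_in_W by (rule sharp_in_based_maps)
qed

lemma restr_sharp_bilext_pointwise_wedge:
  assumes "R \<subseteq> topspace (wr_top U W (Inl x1))"
  shows "restr R (linext (sharp U W (Inl x1) y0) (bilext (pointwise_wedge X1 x1 X2 x2 (topspace U)) P Q))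
       = bilext (\<lambda>h1 h2. restrict (wr_join y0 h1 h2) R)
           (restr (wr_left ` R) (linext (sharp U X1 x1 y0) P))
           (restr (wr_right ` R) (linext (sharp U X2 x2 y0) Q))"
proof -
  have "linext (sharp U W (Inl x1) y0) (bilext (pointwise_wedge X1 x1 X2 x2 (topspace U)) P Q)
      = bilext (\<lambda>h1 h2. restrict (wr_join y0 h1 h2) (topspace (wr_top U W (Inl x1))))
          (linext (sharp U X1 x1 y0) P) (linext (sharp U X2 x2 y0) Q)"
    by (rule linext_bilext) (rule sharp_pointwise_wedge)
  then show ?thesis
    by (simp add: restr_linext_bilext_wr_join[OF assms])
qed

lemma Fsets_wr_left:
  assumes "R \<in> Fsets (wr_top U W (Inl x1)) None n"
  shows "wr_left ` R \<in> Fsets (wr_top U X1 x1) None n"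
proof -
  have "wr_left ` R \<subseteq> topspace (wr_top U X1 x1)"
    using assms wr_left_in_topspace by (auto simp: Fsets_def)
  moreover have "wr_left None = None"
    by (simp add: wr_left_def)
  ultimately show ?thesis
    using Fsets_image[OF assms] by metis
qed

lemma Fsets_wr_right:
  assumes "R \<in> Fsets (wr_top U W (Inl x1)) None n"
  shows "wr_right ` R \<in> Fsets (wr_top U X2 x2) None n"
proof -
  have "wr_right ` R \<subseteq> topspace (wr_top U X2 x2)"
    using assms wr_right_in_topspace by (auto simp: Fsets_def)
  moreover have "wr_right None = None"
    by (simp add: wr_right_def)
  ultimately show ?thesis
    using Fsets_image[OF assms] by metis
qed

lemma filtX_bilext_pointwise_wedge:
  assumes U: "topspace U \<noteq> {}"
    and P: "P \<in> fag (unbased_maps U (compact_open X1 x1 Y y0))"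
    and Q: "Q \<in> fag (unbased_maps U (compact_open X2 x2 Y y0))"
    and PQ: "P \<in> filtX U X1 x1 Y y0 s \<or> Q \<in> filtX U X2 x2 Y y0 s"
  shows "bilext (pointwise_wedge X1 x1 X2 x2 (topspace U)) P Q \<in> filtX U W (Inl x1) Y y0 s"
proof -
  let ?J = "pointwise_wedge X1 x1 X2 x2 (topspace U)" and ?sW = "linext (sharp U W (Inl x1) y0)"
  let ?C = "{h \<in> unbased_maps U (compact_open W (Inl x1) Y y0).
              sharp U W (Inl x1) y0 h \<in> based_maps (wr_top U W (Inl x1)) None Y y0}"
  have "bilext ?J P Q \<in> fag ?C"
  proof (rule bilext_in_fag[OF P Q])
    fix f g assume "f \<in> unbased_maps U (compact_open X1 x1 Y y0)"
      and "g \<in> unbased_maps U (compact_open X2 x2 Y y0)"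
    moreover from this have "sharp U W (Inl x1) y0 (?J f g) \<in> based_maps (wr_top U W (Inl x1)) None Y y0"
      unfolding unbased_maps_def by (intro sharp_pointwise_wedge_in_based_maps[OF _ _ U]) auto
    ultimately show "?J f g \<in> ?C"
      by (simp add: pointwise_wedge_in_unbased_maps)
  qed
  then have "bilext ?J P Q \<in> fag (unbased_maps U (compact_open W (Inl x1) Y y0))"
    and "?sW (bilext ?J P Q) \<in> fag (based_maps (wr_top U W (Inl x1)) None Y y0)"
    using fag_mono[of ?C] by (blast, blast intro: linext_in_fag)
  moreover have "restr R (?sW (bilext ?J P Q)) = 0" if R: "R \<in> Fsets (wr_top U W (Inl x1)) None (s - 1)" for R
    using PQ Fsets_wr_left[OF R] Fsets_wr_right[OF R] R
    by (auto simp: filtX_def filt_def Fsets_def restr_sharp_bilext_pointwise_wedge)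
  ultimately show ?thesis
    by (simp add: filtX_def filt_def)
qed

lemma gen_Xi_wedge_map_diff_in_filtX:
  assumes U: "topspace U \<noteq> {}"
    and a1: "a1 \<in> based_maps X1 x1 Y y0" and a2: "a2 \<in> based_maps X2 x2 Y y0"
    and S1: "S1 \<in> fag (unbased_maps U (compact_open X1 x1 Y y0))"
    and D1: "gen (Xi U a1) - S1 \<in> filtX U X1 x1 Y y0 s"
    and D2: "gen (Xi U a2) - S2 \<in> filtX U X2 x2 Y y0 s"
  shows "gen (Xi U (wedge_map X1 x1 X2 x2 a1 a2))
           - bilext (pointwise_wedge X1 x1 X2 x2 (topspace U)) S1 S2 \<in> filtX U W (Inl x1) Y y0 s"
proof -
  let ?J = "pointwise_wedge X1 x1 X2 x2 (topspace U)"
  have gen2: "gen (Xi U a2) \<in> fag (unbased_maps U (compact_open X2 x2 Y y0))"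
    using a2 by (simp add: fag_def Xi_in_unbased_maps topspace_compact_open)
  have "gen (Xi U (wedge_map X1 x1 X2 x2 a1 a2)) - bilext ?J S1 S2
      = bilext ?J (gen (Xi U a1) - S1) (gen (Xi U a2)) + bilext ?J S1 (gen (Xi U a2) - S2)"
    by (simp add: Xi_wedge_map gen_def bilext_diff_left bilext_diff_right)
  also have "\<dots> \<in> filtX U W (Inl x1) Y y0 s"
    using D1 D2 S1 gen2 by (intro filtX_add filtX_bilext_pointwise_wedge[OF U]) (auto simp: filtX_def)
  finally show ?thesis .
qed

lemma strongly_similar_wedge_map:
  assumes a1: "a1 \<in> based_maps X1 x1 Y y0" and a2: "a2 \<in> based_maps X2 x2 Y y0"
    and sim1: "strongly_similar X1 x1 Y y0 r (const_map X1 y0) a1"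
    and sim2: "strongly_similar X2 x2 Y y0 r (const_map X2 y0) a2"
  shows "strongly_similar W (Inl x1) Y y0 r (const_map W y0) (wedge_map X1 x1 X2 x2 a1 a2)"
  unfolding strongly_similar_def
proof (intro allI impI)
  fix E :: "nat set" assume E: "finite E \<and> E \<noteq> {}"
  let ?U = "simplex_top E"
  let ?J = "pointwise_wedge X1 x1 X2 x2 (topspace ?U)"
  obtain S1 where S1: "S1 \<in> fag (unbased_maps ?U (subtopology (compact_open X1 x1 Y y0)
        (path_component_of_set (compact_open X1 x1 Y y0) (const_map X1 y0))))"
      "fissile E S1" "gen (Xi ?U a1) - S1 \<in> filtX ?U X1 x1 Y y0 (r + 1)"
    using sim1 E unfolding strongly_similar_def by blast
  obtain S2 where S2: "S2 \<in> fag (unbased_maps ?U (subtopology (compact_open X2 x2 Y y0)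
        (path_component_of_set (compact_open X2 x2 Y y0) (const_map X2 y0))))"
      "fissile E S2" "gen (Xi ?U a2) - S2 \<in> filtX ?U X2 x2 Y y0 (r + 1)"
    using sim2 E unfolding strongly_similar_def by blast
  have "bilext ?J S1 S2 \<in> fag (unbased_maps ?U (subtopology (compact_open W (Inl x1) Y y0)
        (path_component_of_set (compact_open W (Inl x1) Y y0) (const_map W y0))))"
    using S1(1) S2(1) by (rule bilext_in_fag) (rule pointwise_wedge_in_path_component)
  moreover have "fissile E (bilext ?J S1 S2)"
    using E S1(2) S2(2) by (simp add: topspace_simplex_top fissile_bilext_pointwise_wedge)
  moreover have "S1 \<in> fag (unbased_maps ?U (compact_open X1 x1 Y y0))"
    using S1(1) by (auto simp: fag_def unbased_maps_def continuous_map_in_subtopology)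
  then have "gen (Xi ?U (wedge_map X1 x1 X2 x2 a1 a2)) - bilext ?J S1 S2 \<in> filtX ?U W (Inl x1) Y y0 (r + 1)"
    using E a1 a2 S1(3) S2(3) by (intro gen_Xi_wedge_map_diff_in_filtX topspace_simplex_top_nonempty) auto
  ultimately show "\<exists>S. S \<in> fag (unbased_maps ?U (subtopology (compact_open W (Inl x1) Y y0)
        (path_component_of_set (compact_open W (Inl x1) Y y0) (const_map W y0))))
      \<and> fissile E S \<and> gen (Xi ?U (wedge_map X1 x1 X2 x2 a1 a2)) - S \<in> filtX ?U W (Inl x1) Y y0 (r + 1)"
    by blast
qed

end

lemma cellular_space_basepoint:
  assumes "cellular_space X x0"
  shows "Hausdorff_space X" "x0 \<in> topspace X"
  using assms unfolding cellular_space_def cw_structure_def by blast+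

theorem corollary7p3:
  fixes X1 :: "'a topology" and X2 :: "'b topology" and Y :: "'c topology"
    and x1 :: 'a and x2 :: 'b and y0 :: 'c and r :: nat
    and a1 :: "'a \<Rightarrow> 'c" and a2 :: "'b \<Rightarrow> 'c"
  assumes "cellular_space X1 x1" and "cellular_space X2 x2" and "cellular_space Y y0"
    and "compact_space X1" and "compact_space X2"
    and "a1 \<in> based_maps X1 x1 Y y0" and "a2 \<in> based_maps X2 x2 Y y0"
    and "strongly_similar X1 x1 Y y0 r (const_map X1 y0) a1"
    and "strongly_similar X2 x2 Y y0 r (const_map X2 y0) a2"
  shows "strongly_similar (wedge_top X1 x1 X2 x2) (Inl x1) Y y0 r
           (const_map (wedge_top X1 x1 X2 x2) y0) (wedge_map X1 x1 X2 x2 a1 a2)"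
proof -
  interpret locally_compact_Hausdorff_wedge X1 x1 X2 x2 Y y0
    using assms(1,2,4,5)
    by unfold_locales (simp_all add: cellular_space_basepoint compact_imp_locally_compact_space)
  show ?thesis
    using assms(6-9) by (rule strongly_similar_wedge_map)
qed

end
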